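(* Let $m,n,r,d$ be integers with $m,n\ge2$, $d\ge1$ and $0<r<\min\{m,n\}$, and let $$\mathcal{A}=\Big\{L(\lambda)R(\lambda): L\in\mathbb{C}[\lambda]^{m\times r},\ R\in\mathbb{C}[\lambda]^{r\times n},\ \deg(L_{*i})+\deg(R_{i*})=d\ \text{for } i=1,\dots,r\Big\}.$$ Then $\mathbb{C}[\lambda]^{m\times n}_{d,r}=\overline{\mathcal{A}}$.
   Context: $\mathbb{C}[\lambda]^{m\times n}_{d,r}$ is the set of complex $m\times n$ polynomial matrices of degree at most $d$ and normal rank (rank over $\mathbb{C}(\lambda)$) at most $r$. Degree of a polynomial vector: maximum degree of entries, $\deg0=-\infty$. $L_{*i}$: $i$th column of $L$; $R_{i*}$: $i$th row of $R$. Closure is in the space $\mathbb{C}[\lambda]^{m\times n}_d$ of polynomial matrices of degree at most $d$ with the metric $\mathrm{dist}(P,Q)=(\sum_{i=0}^d\|P_i-Q_i\|_F^2)^{1/2}$, $P_i,Q_i$ the coefficients of $\lambda^i$. *)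

theory Defs
  imports "Jordan_Normal_Form.DL_Rank" "HOL-Computational_Algebra.Polynomial_Factorial"
    "HOL-Library.Extended_Real"
begin

definition pvec_degree :: "complex poly vec \<Rightarrow> ereal" where
  "pvec_degree v =
     (if \<forall>i<dim_vec v. v $ i = 0 then -\<infinity>
      else ereal (real (Max {degree (v $ i) | i. i < dim_vec v})))"

definition polymat_space :: "nat \<Rightarrow> nat \<Rightarrow> nat \<Rightarrow> complex poly mat set" where
  "polymat_space m n d =
     {P. P \<in> carrier_mat m n \<and> (\<forall>i<m. \<forall>j<n. degree (P $$ (i, j)) \<le> d)}"

definition normal_rank :: "complex poly mat \<Rightarrow> nat" where
  "normal_rank P = vec_space.rank (dim_row P) (map_mat to_fract P)"

definition polymat_rank_le :: "nat \<Rightarrow> nat \<Rightarrow> nat \<Rightarrow> nat \<Rightarrow> complex poly mat set" where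
  "polymat_rank_le m n d r = {P \<in> polymat_space m n d. normal_rank P \<le> r}"

definition pm_dist :: "nat \<Rightarrow> complex poly mat \<Rightarrow> complex poly mat \<Rightarrow> real" where
  "pm_dist d P Q = sqrt (\<Sum>k\<le>d. \<Sum>i<dim_row P. \<Sum>j<dim_col P.
      (cmod (coeff (P $$ (i, j)) k - coeff (Q $$ (i, j)) k))\<^sup>2)"

definition pm_closure :: "nat \<Rightarrow> nat \<Rightarrow> nat \<Rightarrow> complex poly mat set \<Rightarrow> complex poly mat set" where
  "pm_closure m n d A =
     {P \<in> polymat_space m n d. \<forall>\<epsilon>>0. \<exists>Q\<in>A. pm_dist d P Q < \<epsilon>}"

definition prod_set :: "nat \<Rightarrow> nat \<Rightarrow> nat \<Rightarrow> nat \<Rightarrow> complex poly mat set" where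
  "prod_set m n r d =
     {L * R | L R. L \<in> carrier_mat m r \<and> R \<in> carrier_mat r n \<and>
        (\<forall>i<r. pvec_degree (col L i) + pvec_degree (row R i) = ereal (real d))}"

end

(* Normal rank is detected by minors, and a minor that is nonzero as a polynomial stays nonzero
   at a fixed point under small perturbations of the coefficients; so limits of products L R
   with r columns keep normal rank at most r.
   Conversely, a matrix P of normal rank at most r is L Y / q with L having r columns (Cramer's
   rule). Choosing L of minimal total column degree (a minimal basis in Forney's sense) makes its
   columns independent at every point and in their top coefficients; the first property cancels
   q, the second gives deg L_b + deg X_b <= d in P = L X. Raising each degree sum to exactly d
   moves L X only by t times a fixed matrix, so P lies in the closure. *)

theory Submission
  imports Defs "HOL-Computational_Algebra.Fundamental_Theorem_Algebra"
begin

section \<open>Minors and normal rank\<close>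

definition minor_mat :: "'a mat \<Rightarrow> nat \<Rightarrow> (nat \<Rightarrow> nat) \<Rightarrow> (nat \<Rightarrow> nat) \<Rightarrow> 'a mat" where
  "minor_mat A k f g = mat k k (\<lambda>(a, b). A $$ (f a, g b))"

definition border_mat :: "nat \<Rightarrow> (nat \<Rightarrow> nat \<Rightarrow> 'a) \<Rightarrow> (nat \<Rightarrow> 'a) \<Rightarrow> 'a mat" where
  "border_mat k h z = mat (Suc k) (Suc k) (\<lambda>(a, b). if a < k then h a b else z b)"

lemma cofactor_border_mat_last_row:
  "cofactor (border_mat k h z) k b = cofactor (border_mat k h z') k b"
proof -
  have "mat_delete (border_mat k h z) k b = mat_delete (border_mat k h z') k b"
    by (rule eq_matI) (auto simp: mat_delete_def border_mat_def)
  then show ?thesis by (simp add: cofactor_def)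
qed

lemma cofactor_border_mat_corner:
  "cofactor (border_mat k h z) k k = det (mat k k (\<lambda>(a, b). h a b))"
proof -
  have "mat_delete (border_mat k h z) k k = mat k k (\<lambda>(a, b). h a b)"
    by (rule eq_matI) (auto simp: mat_delete_def border_mat_def)
  then show ?thesis by (simp add: cofactor_def)
qed

lemma det_border_mat:
  fixes h :: "nat \<Rightarrow> nat \<Rightarrow> 'a::comm_ring_1"
  shows "det (border_mat k h z) = (\<Sum>b<Suc k. z b * cofactor (border_mat k h (\<lambda>_. 0)) k b)"
proof -
  have "det (border_mat k h z) = (\<Sum>b<Suc k. border_mat k h z $$ (k, b) * cofactor (border_mat k h z) k b)"
    by (rule laplace_expansion_row) (auto simp: border_mat_def)
  also have "\<dots> = (\<Sum>b<Suc k. z b * cofactor (border_mat k h (\<lambda>_. 0)) k b)"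
    by (intro sum.cong refl arg_cong2[where f = "(*)"] cofactor_border_mat_last_row)
      (simp add: border_mat_def)
  finally show ?thesis .
qed

text \<open>If every bordering of a nonsingular \<open>k \<times> k\<close> selection by a further row were singular,
  expansion along the last row would make the cofactor vector, whose last entry is the
  \<open>k \<times> k\<close> determinant, a nonzero vector annihilated by every row.\<close>
lemma exists_nonsingular_row_selection:
  fixes B :: "nat \<Rightarrow> nat \<Rightarrow> 'a::comm_ring_1"
  assumes "\<forall>v. (\<forall>i<n. (\<Sum>b<k. B i b * v b) = 0) \<longrightarrow> (\<forall>b<k. v b = 0)"
  shows "\<exists>f. (\<forall>a<k. f a < n) \<and> det (mat k k (\<lambda>(a, b). B (f a) b)) \<noteq> 0"
  using assms
proof (induction k)
  case 0
  then show ?case by (simp add: det_def)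
next
  case (Suc k)
  have "\<forall>b<k. v b = 0" if "\<forall>i<n. (\<Sum>b<k. B i b * v b) = 0" for v
  proof -
    have "\<forall>b<Suc k. (if b < k then v b else 0) = 0"
      using Suc.prems[rule_format, of "\<lambda>b. if b < k then v b else 0"] that by simp
    then show ?thesis by (metis less_SucI)
  qed
  then obtain f where f: "\<forall>a<k. f a < n" "det (mat k k (\<lambda>(a, b). B (f a) b)) \<noteq> 0"
    using Suc.IH by blast
  define C where "C b = cofactor (border_mat k (\<lambda>a. B (f a)) (\<lambda>_. 0)) k b" for b
  have "C k \<noteq> 0"
    using f(2) by (simp add: C_def cofactor_border_mat_corner)
  then obtain i where i: "i < n" "(\<Sum>b<Suc k. B i b * C b) \<noteq> 0"
    using Suc.prems by blast
  have "mat (Suc k) (Suc k) (\<lambda>(a, b). B ((f(k := i)) a) b) = border_mat k (\<lambda>a. B (f a)) (B i)"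
    by (rule eq_matI) (auto simp: border_mat_def)
  then have "det (mat (Suc k) (Suc k) (\<lambda>(a, b). B ((f(k := i)) a) b)) \<noteq> 0"
    using i(2) by (simp add: det_border_mat C_def)
  moreover have "\<forall>a<Suc k. (f(k := i)) a < n"
    using f(1) i(1) by (simp add: less_Suc_eq)
  ultimately show ?case by blast
qed

lemma (in vec_space) exists_independent_column_selection:
  assumes A: "A \<in> carrier_mat n nc" and k: "k \<le> rank A"
  shows "\<exists>g. (\<forall>b<k. g b < nc) \<and>
    (\<forall>v. (\<forall>i<n. (\<Sum>b<k. A $$ (i, g b) * v b) = 0) \<longrightarrow> (\<forall>b<k. v b = 0))"
proof -
  obtain S where S: "maximal S (\<lambda>T. T \<subseteq> set (cols A) \<and> lin_indpt T)"
    using maximal_exists_superset[of "set (cols A)" "\<lambda>T. T \<subseteq> set (cols A) \<and> lin_indpt T" "{}"]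
      finite_lin_indpt2 by blast
  then have S_cols: "S \<subseteq> set (cols A)" and S_indpt: "lin_indpt S"
    by (auto simp: maximal_def)
  have "k \<le> card S"
    using k rank_card_indpt[OF A S] by simp
  then obtain T where T: "T \<subseteq> S" "card T = k" "finite T"
    by (rule obtain_subset_with_card_n)
  then obtain ts where ts: "set ts = T" "distinct ts"
    using finite_distinct_list by blast
  then have ts_length: "length ts = k"
    using T(2) by (metis distinct_card)
  have "\<exists>j<nc. col A j = ts ! b" if "b < k" for b
  proof -
    have "ts ! b \<in> set (cols A)"
      using that ts_length ts(1) T(1) S_cols nth_mem by blast
    then show ?thesis using A by (auto simp: cols_def)
  qed
  then obtain g where g: "\<forall>b<k. g b < nc \<and> col A (g b) = ts ! b"
    by metis
  define B where "B = mat n k (\<lambda>(i, b). A $$ (i, g b))"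
  have B: "B \<in> carrier_mat n k" by (simp add: B_def)
  have "col B b = ts ! b" if "b < k" for b
  proof -
    have "g b < nc" using that g by blast
    then have "col B b = col A (g b)" using A that by (auto simp: B_def intro!: eq_vecI)
    then show ?thesis using that g by simp
  qed
  then have "cols B = ts"
    using B ts_length by (intro nth_equalityI) auto
  then have B_indpt: "lin_indpt (set (cols B))" and B_distinct: "distinct (cols B)"
    using subset_li_is_li[OF S_indpt T(1)] ts by auto
  have "\<forall>b<k. v b = 0" if v: "\<forall>i<n. (\<Sum>b<k. A $$ (i, g b) * v b) = 0" for v
  proof (rule ccontr)
    assume "\<not> (\<forall>b<k. v b = 0)"
    then have "vec k v \<noteq> 0\<^sub>v k" by (metis index_vec index_zero_vec(1))
    moreover have "B *\<^sub>v vec k v = 0\<^sub>v n"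
      using v by (intro eq_vecI) (simp_all add: B_def scalar_prod_def atLeast0LessThan)
    ultimately have "lin_dep (set (cols B))"
      using lin_depI[OF B, of "vec k v"] B_distinct by simp
    then show False using B_indpt by simp
  qed
  then show ?thesis using g by blast
qed

lemma (in vec_space) rank_ge_of_independent_columns:
  assumes A: "A \<in> carrier_mat n nc" and g: "\<forall>b<k. g b < nc"
    and indep: "\<forall>v. (\<forall>i<n. (\<Sum>b<k. A $$ (i, g b) * v b) = 0) \<longrightarrow> (\<forall>b<k. v b = 0)"
  shows "k \<le> rank A"
proof -
  define B where "B = mat n k (\<lambda>(i, b). A $$ (i, g b))"
  have B: "B \<in> carrier_mat n k" by (simp add: B_def)
  have col_B: "col B b = col A (g b)" if "b < k" for b
    using that g A by (auto simp: B_def intro!: eq_vecI)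
  have "col B b \<noteq> col B b'" if b: "b < k" "b' < k" "b \<noteq> b'" for b b'
  proof
    assume "col B b = col B b'"
    then have "col A (g b) $ i = col A (g b') $ i" for i
      using col_B b by simp
    then have "A $$ (i, g b) = A $$ (i, g b')" if "i < n" for i
      using that b g A by (metis carrier_matD index_col)
    then have "\<forall>i<n. (\<Sum>c<k. A $$ (i, g c) * ((if c = b then 1 else 0) - (if c = b' then 1 else 0))) = 0"
      using b by (simp add: right_diff_distrib sum_subtractf if_distrib[of "(*) x" for x] cong: if_cong)
    then show False
      using indep[rule_format, of "\<lambda>c. (if c = b then 1 else 0) - (if c = b' then 1 else 0)" b] b by simp
  qed
  then have B_distinct: "distinct (cols B)"
    using B by (auto simp: distinct_conv_nth)
  have "lin_indpt (set (cols B))"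
  proof
    assume "lin_dep (set (cols B))"
    then obtain v where v: "v \<in> carrier_vec k" "v \<noteq> 0\<^sub>v k" "B *\<^sub>v v = 0\<^sub>v n"
      using lin_depE[OF B _ B_distinct] by blast
    have "(\<Sum>b<k. A $$ (i, g b) * v $ b) = (B *\<^sub>v v) $ i" if "i < n" for i
      using that v(1) by (simp add: B_def scalar_prod_def atLeast0LessThan)
    then have "\<forall>i<n. (\<Sum>b<k. A $$ (i, g b) * v $ b) = 0"
      using v(3) by simp
    then show False
      using indep v(1,2) by (metis carrier_vecD eq_vecI index_zero_vec)
  qed
  moreover have "set (cols B) \<subseteq> set (cols A)"
    using col_B g A B by (auto simp: cols_def)
  moreover have "card (set (cols B)) = k"
    using distinct_card[OF B_distinct] B by simp
  ultimately show ?thesis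
    using rank_ge_card_indpt[OF A] by metis
qed

lemma (in vec_space) rank_ge_iff_nonzero_minor:
  assumes A: "A \<in> carrier_mat n nc"
  shows "k \<le> rank A \<longleftrightarrow>
    (\<exists>f g. (\<forall>a<k. f a < n) \<and> (\<forall>b<k. g b < nc) \<and> det (minor_mat A k f g) \<noteq> 0)"
proof
  assume "k \<le> rank A"
  then obtain g where g: "\<forall>b<k. g b < nc"
    and "\<forall>v. (\<forall>i<n. (\<Sum>b<k. A $$ (i, g b) * v b) = 0) \<longrightarrow> (\<forall>b<k. v b = 0)"
    using exists_independent_column_selection[OF A] by blast
  then obtain f where "\<forall>a<k. f a < n" "det (mat k k (\<lambda>(a, b). A $$ (f a, g b))) \<noteq> 0"
    using exists_nonsingular_row_selection[where B = "\<lambda>i b. A $$ (i, g b)"] by blast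
  then show "\<exists>f g. (\<forall>a<k. f a < n) \<and> (\<forall>b<k. g b < nc) \<and> det (minor_mat A k f g) \<noteq> 0"
    using g unfolding minor_mat_def by blast
next
  assume "\<exists>f g. (\<forall>a<k. f a < n) \<and> (\<forall>b<k. g b < nc) \<and> det (minor_mat A k f g) \<noteq> 0"
  then obtain f g where f: "\<forall>a<k. f a < n" and g: "\<forall>b<k. g b < nc"
    and det: "det (minor_mat A k f g) \<noteq> 0"
    by blast
  have "\<forall>b<k. v b = 0" if v: "\<forall>i<n. (\<Sum>b<k. A $$ (i, g b) * v b) = 0" for v
  proof -
    have M: "minor_mat A k f g \<in> carrier_mat k k" by (simp add: minor_mat_def)
    have "minor_mat A k f g *\<^sub>v vec k v = 0\<^sub>v k"
      using v f by (intro eq_vecI) (simp_all add: minor_mat_def scalar_prod_def atLeast0LessThan)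
    then have "vec k v = 0\<^sub>v k"
      using det det_0_iff_vec_prod_zero[OF M] vec_carrier by blast
    then show ?thesis by (metis index_vec index_zero_vec(1))
  qed
  then show "k \<le> rank A"
    using rank_ge_of_independent_columns[OF A g] by blast
qed

lemma (in comm_ring_hom) hom_det_minor_mat:
  assumes "\<forall>a<k. f a < dim_row A" and "\<forall>b<k. g b < dim_col A"
  shows "det (minor_mat (map_mat hom A) k f g) = hom (det (minor_mat A k f g))"
proof -
  have "minor_mat (map_mat hom A) k f g = map_mat hom (minor_mat A k f g)"
    using assms by (intro eq_matI) (auto simp: minor_mat_def)
  then show ?thesis by (simp add: hom_det)
qed

lemma comm_ring_hom_to_fract: "comm_ring_hom (to_fract :: 'a::idom \<Rightarrow> 'a fract)"
  by unfold_locales auto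

lemma rank_to_fract_ge_iff_nonzero_minor:
  fixes A :: "'a::idom mat"
  assumes A: "A \<in> carrier_mat n nc"
  shows "k \<le> vec_space.rank n (map_mat to_fract A) \<longleftrightarrow>
    (\<exists>f g. (\<forall>a<k. f a < n) \<and> (\<forall>b<k. g b < nc) \<and> det (minor_mat A k f g) \<noteq> 0)"
proof -
  have "map_mat to_fract A \<in> carrier_mat n nc" using A by simp
  then have "k \<le> vec_space.rank n (map_mat to_fract A) \<longleftrightarrow> (\<exists>f g. (\<forall>a<k. f a < n) \<and>
      (\<forall>b<k. g b < nc) \<and> det (minor_mat (map_mat to_fract A) k f g) \<noteq> 0)"
    by (rule vec_space.rank_ge_iff_nonzero_minor)
  moreover have "det (minor_mat (map_mat to_fract A) k f g) \<noteq> 0 \<longleftrightarrow> det (minor_mat A k f g) \<noteq> 0"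
    if "\<forall>a<k. f a < n" "\<forall>b<k. g b < nc" for f g
    using that A comm_ring_hom.hom_det_minor_mat[OF comm_ring_hom_to_fract, of k f A g]
    by (simp add: to_fract_eq_0_iff)
  ultimately show ?thesis
    by (metis (no_types, lifting))
qed

lemma normal_rank_ge_iff_nonzero_minor:
  assumes "P \<in> carrier_mat m n"
  shows "k \<le> normal_rank P \<longleftrightarrow>
    (\<exists>f g. (\<forall>a<k. f a < m) \<and> (\<forall>b<k. g b < n) \<and> det (minor_mat P k f g) \<noteq> 0)"
  using rank_to_fract_ge_iff_nonzero_minor[OF assms] assms by (simp add: normal_rank_def)

text \<open>A minor of size \<open>k > r\<close> of a product through \<open>r\<close> dimensions factors through
  \<open>k \<times> k\<close> matrices with a zero column.\<close>
lemma det_minor_mat_mult_eq_0: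
  fixes A :: "'a::comm_ring_1 mat"
  assumes A: "A \<in> carrier_mat m r" and B: "B \<in> carrier_mat r n" and "r < k"
    and f: "\<forall>a<k. f a < m" and g: "\<forall>b<k. g b < n"
  shows "det (minor_mat (A * B) k f g) = 0"
proof -
  define A' where "A' = mat k k (\<lambda>(a, c). if c < r then A $$ (f a, c) else 0)"
  define B' where "B' = mat k k (\<lambda>(c, b). if c < r then B $$ (c, g b) else 0)"
  have A': "A' \<in> carrier_mat k k" and B': "B' \<in> carrier_mat k k"
    by (auto simp: A'_def B'_def)
  have entry: "(A' * B') $$ (a, b) = (\<Sum>c<r. A $$ (f a, c) * B $$ (c, g b))" if "a < k" "b < k" for a b
  proof -
    have "(A' * B') $$ (a, b) = (\<Sum>c<k. A' $$ (a, c) * B' $$ (c, b))"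
      using that A' B' by (simp add: scalar_prod_def atLeast0LessThan)
    also have "\<dots> = (\<Sum>c<k. if c < r then A $$ (f a, c) * B $$ (c, g b) else 0)"
      using that by (intro sum.cong) (auto simp: A'_def B'_def)
    also have "\<dots> = (\<Sum>c<r. A $$ (f a, c) * B $$ (c, g b))"
    proof -
      have "{..<k} \<inter> {c. c < r} = {..<r}" using \<open>r < k\<close> by auto
      then show ?thesis by (simp add: sum.If_cases)
    qed
    finally show ?thesis .
  qed
  have "minor_mat (A * B) k f g = A' * B'"
  proof (rule eq_matI)
    fix a b assume "a < dim_row (A' * B')" "b < dim_col (A' * B')"
    then have ab: "a < k" "b < k" using A' B' by auto
    show "minor_mat (A * B) k f g $$ (a, b) = (A' * B') $$ (a, b)"
      unfolding entry[OF ab] using A B f g ab by (simp add: minor_mat_def scalar_prod_def atLeast0LessThan)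
  qed (use A' B' in \<open>auto simp: minor_mat_def\<close>)
  moreover have "det A' = 0"
  proof -
    have "det A' = (\<Sum>i<k. A' $$ (i, r) * cofactor A' i r)"
      by (rule laplace_expansion_column[OF A' \<open>r < k\<close>])
    also have "\<dots> = 0"
      using \<open>r < k\<close> by (intro sum.neutral) (simp add: A'_def)
    finally show ?thesis .
  qed
  ultimately show ?thesis
    using det_mult[OF A' B'] by simp
qed

lemma normal_rank_mult_le:
  assumes L: "L \<in> carrier_mat m r" and R: "R \<in> carrier_mat r n"
  shows "normal_rank (L * R) \<le> r"
proof (rule ccontr)
  assume "\<not> normal_rank (L * R) \<le> r"
  then obtain f g where "\<forall>a<Suc r. f a < m" "\<forall>b<Suc r. g b < n"
    "det (minor_mat (L * R) (Suc r) f g) \<noteq> 0"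
    using normal_rank_ge_iff_nonzero_minor[of "L * R" m n "Suc r"] L R by auto
  then show False
    using det_minor_mat_mult_eq_0[OF L R lessI] by blast
qed

section \<open>Minimal left factors\<close>

text \<open>Matrices are index functions here, so that single columns can be replaced.\<close>
definition factorizes :: "nat \<Rightarrow> nat \<Rightarrow> nat \<Rightarrow> (nat \<Rightarrow> nat \<Rightarrow> 'a::comm_ring_1) \<Rightarrow> 'a \<Rightarrow>
    (nat \<Rightarrow> nat \<Rightarrow> 'a) \<Rightarrow> (nat \<Rightarrow> nat \<Rightarrow> 'a) \<Rightarrow> bool" where
  "factorizes m n r P q L Y \<longleftrightarrow> (\<forall>a<m. \<forall>j<n. q * P a j = (\<Sum>b<r. L a b * Y b j))"

text \<open>Cramer's rule on a nonsingular minor of maximal size \<open>s\<close>: every bordered minor of size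
  \<open>s + 1\<close> vanishes, and expanding it along its last row expresses the minor's determinant
  times \<open>P\<close> through the \<open>s\<close> selected columns of \<open>P\<close>.\<close>
lemma scaled_factorization_of_rank_le:
  fixes P :: "'a::idom mat"
  assumes P: "P \<in> carrier_mat m n" and rank: "vec_space.rank m (map_mat to_fract P) \<le> r"
  shows "\<exists>q L Y. q \<noteq> 0 \<and> factorizes m n r (\<lambda>a j. P $$ (a, j)) q L Y"
proof -
  define s where "s = vec_space.rank m (map_mat to_fract P)"
  obtain f g where f: "\<forall>a<s. f a < m" and g: "\<forall>b<s. g b < n"
    and det: "det (minor_mat P s f g) \<noteq> 0"
    using rank_to_fract_ge_iff_nonzero_minor[OF P, of s] by (auto simp: s_def)
  define C where "C j b = cofactor (border_mat s (\<lambda>a b. P $$ (f a, (g(s := j)) b)) (\<lambda>_. 0)) s b"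
    for j b
  have cramer: "det (minor_mat P s f g) * P $$ (i, j) = (\<Sum>b<s. P $$ (i, g b) * - C j b)"
    if i: "i < m" and j: "j < n" for i j
  proof -
    have "\<not> Suc s \<le> s" by simp
    moreover have "\<forall>a<Suc s. (f(s := i)) a < m" "\<forall>b<Suc s. (g(s := j)) b < n"
      using f g i j by (auto simp: less_Suc_eq)
    ultimately have "det (minor_mat P (Suc s) (f(s := i)) (g(s := j))) = 0"
      using rank_to_fract_ge_iff_nonzero_minor[OF P, of "Suc s"] unfolding s_def by blast
    moreover have "minor_mat P (Suc s) (f(s := i)) (g(s := j)) =
        border_mat s (\<lambda>a b. P $$ (f a, (g(s := j)) b)) (\<lambda>b. P $$ (i, (g(s := j)) b))"
      by (rule eq_matI) (auto simp: minor_mat_def border_mat_def)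
    moreover have "C j s = det (minor_mat P s f g)"
      unfolding C_def cofactor_border_mat_corner minor_mat_def
      by (intro arg_cong[where f = det] eq_matI) auto
    ultimately have "0 = (\<Sum>b<s. P $$ (i, g b) * C j b) + P $$ (i, j) * det (minor_mat P s f g)"
      by (simp add: det_border_mat C_def)
    then show ?thesis
      by (simp add: sum_negf algebra_simps eq_neg_iff_add_eq_0)
  qed
  define L where "L a b = (if b < s then P $$ (a, g b) else 0)" for a b
  define Y where "Y b j = (if b < s then - C j b else 0)" for b j
  have "{..<r} \<inter> {b. b < s} = {..<s}"
    using rank by (auto simp: s_def)
  then have "(\<Sum>b<r. L a b * Y b j) = (\<Sum>b<s. P $$ (a, g b) * - C j b)" for a j
    by (simp add: L_def Y_def sum.If_cases if_distrib[of "\<lambda>x. x * _"] cong: if_cong)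
  then have "factorizes m n r (\<lambda>a j. P $$ (a, j)) (det (minor_mat P s f g)) L Y"
    using cramer by (simp add: factorizes_def)
  then show ?thesis using det by blast
qed

definition col_degree :: "nat \<Rightarrow> (nat \<Rightarrow> 'a::zero poly) \<Rightarrow> nat" where
  "col_degree m c = Max ((\<lambda>a. degree (c a)) ` {..<m})"

text \<open>The successor keeps a nonzero constant column apart from a zero column.\<close>
definition col_size :: "nat \<Rightarrow> (nat \<Rightarrow> 'a::zero poly) \<Rightarrow> nat" where
  "col_size m c = (if \<forall>a<m. c a = 0 then 0 else Suc (col_degree m c))"

lemma degree_le_col_degree: "a < m \<Longrightarrow> degree (c a) \<le> col_degree m c"
  unfolding col_degree_def by (rule Max_ge) auto

lemma col_degree_le_iff: "0 < m \<Longrightarrow> col_degree m c \<le> e \<longleftrightarrow> (\<forall>a<m. degree (c a) \<le> e)"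
  unfolding col_degree_def by (subst Max_le_iff) auto

lemma col_degree_eqI:
  assumes "a0 < m" and "degree (c a0) = e" and "\<forall>a<m. degree (c a) \<le> e"
  shows "col_degree m c = e"
  using assms degree_le_col_degree[of a0 m c] col_degree_le_iff[of m c e] by fastforce

lemma col_size_less:
  assumes c: "\<exists>a<m. c a \<noteq> 0" and u: "\<forall>a<m. u a = 0 \<or> degree (u a) < col_degree m c"
  shows "col_size m u < col_size m c"
proof (cases "\<forall>a<m. u a = 0")
  case False
  then have "0 < m" "0 < col_degree m c" using u by fastforce+
  then have "col_degree m u < col_degree m c"
    using u col_degree_le_iff[of m u "col_degree m c - 1"] by fastforce
  then show ?thesis using c False by (simp add: col_size_def)
qed (use c in \<open>simp add: col_size_def\<close>)

lemma exists_max_on_support: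
  fixes h :: "nat \<Rightarrow> nat"
  assumes "\<exists>b<r. y b \<noteq> 0"
  obtains i where "i < r" "y i \<noteq> 0" "\<And>b. b < r \<Longrightarrow> y b \<noteq> 0 \<Longrightarrow> h b \<le> h i"
proof -
  obtain b0 where "b0 < r" "y b0 \<noteq> 0" using assms by blast
  moreover have "h b < Suc (Max (h ` {..<r}))" if "b < r" for b
    using that by (simp add: le_imp_less_Suc)
  ultimately show ?thesis
    using ex_has_greatest_nat[of "\<lambda>b. b < r \<and> y b \<noteq> 0" b0 h] that by blast
qed

text \<open>A left factor of \<open>P\<close> over the field of rational functions (the scalar \<open>q\<close> clears
  denominators) whose total column degree is minimal: Forney's minimal bases.\<close>
definition minimal_left_factor :: "nat \<Rightarrow> nat \<Rightarrow> nat \<Rightarrow> (nat \<Rightarrow> nat \<Rightarrow> 'a::field poly) \<Rightarrow>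
    (nat \<Rightarrow> nat \<Rightarrow> 'a poly) \<Rightarrow> bool" where
  "minimal_left_factor m n r P L \<longleftrightarrow> (\<exists>q Y. q \<noteq> 0 \<and> factorizes m n r P q L Y) \<and>
    (\<forall>L' q Y. q \<noteq> 0 \<longrightarrow> factorizes m n r P q L' Y \<longrightarrow>
      (\<Sum>b<r. col_size m (\<lambda>a. L a b)) \<le> (\<Sum>b<r. col_size m (\<lambda>a. L' a b)))"

lemma exists_minimal_left_factor:
  assumes "q \<noteq> 0" and "factorizes m n r P q L Y"
  shows "\<exists>L. minimal_left_factor m n r P L"
proof -
  obtain L' where "\<exists>q Y. q \<noteq> 0 \<and> factorizes m n r P q L' Y"
    and "\<forall>L''. (\<exists>q Y. q \<noteq> 0 \<and> factorizes m n r P q L'' Y) \<longrightarrow>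
      (\<Sum>b<r. col_size m (\<lambda>a. L' a b)) \<le> (\<Sum>b<r. col_size m (\<lambda>a. L'' a b))"
    using ex_has_least_nat[where P = "\<lambda>L. \<exists>q Y. q \<noteq> 0 \<and> factorizes m n r P q L Y"
        and m = "\<lambda>L. \<Sum>b<r. col_size m (\<lambda>a. L a b)"] assms
    by blast
  then show ?thesis unfolding minimal_left_factor_def by blast
qed

lemma smult_sum_right: "smult c (\<Sum>x\<in>S. f x) = (\<Sum>x\<in>S. smult c (f x))"
  using sum_distrib_left[of "[:c:]" f S] by simp

text \<open>Column \<open>i\<close> may be traded for any \<open>u\<close> with \<open>g u = \<Sum>b w b L\<^sub>b\<close> and \<open>w i\<close> a nonzero constant,
  because \<open>L\<^sub>i\<close> is then a rational combination of \<open>u\<close> and the other columns.\<close>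
lemma factorizes_replace_column:
  fixes L Y :: "nat \<Rightarrow> nat \<Rightarrow> 'a::field poly"
  assumes fact: "factorizes m n r P q L Y" and i: "i < r" and w: "w i = [:c:]" and c: "c \<noteq> 0"
    and u: "\<forall>a<m. g * u a = (\<Sum>b<r. w b * L a b)"
  shows "factorizes m n r P q (\<lambda>a b. if b = i then u a else L a b)
    (\<lambda>b j. if b = i then smult (1 / c) (g * Y i j) else Y b j - smult (1 / c) (w b * Y i j))"
  unfolding factorizes_def
proof (intro allI impI)
  fix a j assume a: "a < m" and j: "j < n"
  let ?R = "{..<r} - {i}"
  have split: "(\<Sum>b<r. F b) = F i + (\<Sum>b\<in>?R. F b)" for F :: "nat \<Rightarrow> 'a poly"
    using i by (simp add: sum.remove)
  have "u a * smult (1 / c) (g * Y i j) = smult (1 / c) (Y i j * (g * u a))"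
    by (simp add: algebra_simps)
  also have "\<dots> = L a i * Y i j + smult (1 / c) (Y i j * (\<Sum>b\<in>?R. w b * L a b))"
  proof -
    have "g * u a = smult c (L a i) + (\<Sum>b\<in>?R. w b * L a b)"
      using u a w by (simp add: split[of "\<lambda>b. w b * L a b"])
    then show ?thesis
      using c by (simp add: algebra_simps smult_add_right)
  qed
  finally have "u a * smult (1 / c) (g * Y i j) + (\<Sum>b\<in>?R. L a b * (Y b j - smult (1 / c) (w b * Y i j)))
      = L a i * Y i j + (\<Sum>b\<in>?R. L a b * Y b j)"
    by (simp add: algebra_simps sum_subtractf sum_distrib_left smult_sum_right)
  also have "\<dots> = q * P a j"
    using fact a j by (simp add: factorizes_def split[of "\<lambda>b. L a b * Y b j"])
  finally show "q * P a j = (\<Sum>b<r. (if b = i then u a else L a b) *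
      (if b = i then smult (1 / c) (g * Y i j) else Y b j - smult (1 / c) (w b * Y i j)))"
    by (simp add: split)
qed

lemma minimal_left_factor_no_degree_drop:
  fixes L :: "nat \<Rightarrow> nat \<Rightarrow> 'a::field poly"
  assumes min: "minimal_left_factor m n r P L" and i: "i < r" and L_i: "\<exists>a<m. L a i \<noteq> 0"
    and w: "w i = [:c:]" "c \<noteq> 0" and u: "\<forall>a<m. g * u a = (\<Sum>b<r. w b * L a b)"
    and drop: "\<forall>a<m. u a = 0 \<or> degree (u a) < col_degree m (\<lambda>a. L a i)"
  shows False
proof -
  define L' where "L' a b = (if b = i then u a else L a b)" for a b
  obtain q Y where "q \<noteq> 0" "factorizes m n r P q L Y"
    using min by (auto simp: minimal_left_factor_def)
  then have "(\<Sum>b<r. col_size m (\<lambda>a. L a b)) \<le> (\<Sum>b<r. col_size m (\<lambda>a. L' a b))"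
    using min factorizes_replace_column[OF _ i w u] unfolding L'_def minimal_left_factor_def by blast
  moreover have "(\<Sum>b<r. col_size m (\<lambda>a. L' a b)) < (\<Sum>b<r. col_size m (\<lambda>a. L a b))"
  proof -
    have L'_col: "(\<lambda>a. L' a b) = (if b = i then u else (\<lambda>a. L a b))" for b
      by (auto simp: L'_def)
    show ?thesis
      using i col_size_less[OF L_i drop] by (intro sum_strict_mono_ex1) (auto simp: L'_col)
  qed
  ultimately show False by simp
qed

text \<open>A dependency among the columns at \<open>z\<close>, divided by \<open>\<lambda> - z\<close>, would replace the column of
  largest degree occurring in it by one of smaller degree.\<close>
lemma minimal_left_factor_independent_at:
  fixes L :: "nat \<Rightarrow> nat \<Rightarrow> 'a::field poly"
  assumes min: "minimal_left_factor m n r P L"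
    and support: "\<forall>b<r. y b \<noteq> 0 \<longrightarrow> (\<exists>a<m. L a b \<noteq> 0)"
    and vanish: "\<forall>a<m. (\<Sum>b<r. y b * poly (L a b) z) = 0"
  shows "\<forall>b<r. y b = 0"
proof (rule ccontr)
  assume "\<not> (\<forall>b<r. y b = 0)"
  then obtain i where i: "i < r" "y i \<noteq> 0"
    and max: "\<And>b. b < r \<Longrightarrow> y b \<noteq> 0 \<Longrightarrow> col_degree m (\<lambda>a. L a b) \<le> col_degree m (\<lambda>a. L a i)"
    using exists_max_on_support[of r y "\<lambda>b. col_degree m (\<lambda>a. L a b)"] by blast
  define s where "s a = (\<Sum>b<r. [:y b:] * L a b)" for a
  define u where "u a = s a div [:- z, 1:]" for a
  have s_u: "[:- z, 1:] * u a = s a" if "a < m" for a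
  proof -
    have "poly (s a) z = 0"
      using vanish that by (simp add: s_def poly_sum mult.commute)
    then have "[:- z, 1:] dvd s a"
      by (simp add: poly_eq_0_iff_dvd)
    then show ?thesis
      unfolding u_def by (rule dvd_mult_div_cancel)
  qed
  have "u a = 0 \<or> degree (u a) < col_degree m (\<lambda>a. L a i)" if a: "a < m" for a
  proof -
    have "degree ([:y b:] * L a b) \<le> col_degree m (\<lambda>a. L a i)" if "b < r" for b
      using max[OF that] degree_le_col_degree[OF a, of "\<lambda>a. L a b"] by (cases "y b = 0") auto
    then have deg_s: "degree (s a) \<le> col_degree m (\<lambda>a. L a i)"
      unfolding s_def by (intro degree_sum_le) auto
    show ?thesis
    proof (cases "u a = 0")
      case False
      then have "degree (s a) = Suc (degree (u a))"
        using s_u[OF a] degree_mult_eq[of "[:- z, 1:]" "u a"] by simp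
      then show ?thesis using deg_s by simp
    qed simp
  qed
  then show False
    using minimal_left_factor_no_degree_drop[OF min i(1) _ _ i(2),
        where w = "\<lambda>b. [:y b:]" and g = "[:- z, 1:]" and u = u] support i s_u
    unfolding s_def by blast
qed

text \<open>Likewise for a dependency among the top coefficients, after shifting all columns occurring in
  it to the largest degree.\<close>
lemma minimal_left_factor_column_reduced:
  fixes L :: "nat \<Rightarrow> nat \<Rightarrow> 'a::field poly"
  assumes min: "minimal_left_factor m n r P L"
    and support: "\<forall>b<r. y b \<noteq> 0 \<longrightarrow> (\<exists>a<m. L a b \<noteq> 0)"
    and cancel: "\<forall>a<m. (\<Sum>b<r. y b * coeff (L a b) (col_degree m (\<lambda>a. L a b))) = 0"
  shows "\<forall>b<r. y b = 0"
proof (rule ccontr)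
  assume "\<not> (\<forall>b<r. y b = 0)"
  then obtain i where i: "i < r" "y i \<noteq> 0"
    and max: "\<And>b. b < r \<Longrightarrow> y b \<noteq> 0 \<Longrightarrow> col_degree m (\<lambda>a. L a b) \<le> col_degree m (\<lambda>a. L a i)"
    using exists_max_on_support[of r y "\<lambda>b. col_degree m (\<lambda>a. L a b)"] by blast
  define D where "D = col_degree m (\<lambda>a. L a i)"
  define w where "w b = monom (y b) (D - col_degree m (\<lambda>a. L a b))" for b
  define u where "u a = (\<Sum>b<r. w b * L a b)" for a
  have "u a = 0 \<or> degree (u a) < D" if a: "a < m" for a
  proof -
    have summand: "degree (w b * L a b) \<le> D \<and>
        coeff (w b * L a b) D = y b * coeff (L a b) (col_degree m (\<lambda>a. L a b))" if "b < r" for b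
    proof (cases "y b = 0")
      case False
      then have le: "col_degree m (\<lambda>a. L a b) \<le> D"
        using max[OF that] by (simp add: D_def)
      have "degree (w b * L a b) \<le> degree (w b) + degree (L a b)"
        by (rule degree_mult_le)
      also have "\<dots> \<le> (D - col_degree m (\<lambda>a. L a b)) + col_degree m (\<lambda>a. L a b)"
        using degree_le_col_degree[OF a] by (intro add_mono) (auto simp: w_def degree_monom_le)
      finally show ?thesis
        using le by (simp add: w_def coeff_monom_mult)
    qed (simp add: w_def)
    then have "degree (u a) \<le> D"
      unfolding u_def by (intro degree_sum_le) auto
    moreover have "coeff (u a) D = 0"
      unfolding u_def coeff_sum using summand cancel a by simp
    ultimately show ?thesis
      by (metis le_neq_implies_less leading_coeff_0_iff)
  qed
  then show False
    using minimal_left_factor_no_degree_drop[OF min i(1) _ _ i(2), where w = w and g = 1 and u = u]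
      support i by (simp add: u_def w_def D_def monom_0)
qed

lemma factorizes_restrict_support:
  assumes "factorizes m n r P q L Y"
  shows "factorizes m n r P q L (\<lambda>b j. if \<forall>a<m. L a b = 0 then 0 else Y b j)"
  using assms unfolding factorizes_def by (auto intro!: sum.cong)

lemma factorizes_divide_root:
  fixes Y :: "nat \<Rightarrow> nat \<Rightarrow> 'a::field poly"
  assumes fact: "factorizes m n r P q L Y" and q: "poly q z = 0"
    and Y: "\<forall>b<r. \<forall>j<n. poly (Y b j) z = 0"
  shows "factorizes m n r P (q div [:- z, 1:]) L (\<lambda>b j. Y b j div [:- z, 1:])"
  unfolding factorizes_def
proof (intro allI impI)
  fix a j assume a: "a < m" and j: "j < n"
  have div: "[:- z, 1:] * (p div [:- z, 1:]) = p" if "poly p z = 0" for p :: "'a poly"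
    using that by (subst dvd_mult_div_cancel) (simp_all add: poly_eq_0_iff_dvd)
  have "[:- z, 1:] * ((q div [:- z, 1:]) * P a j) = q * P a j"
    using div[OF q] by (simp add: mult.assoc[symmetric])
  also have "\<dots> = (\<Sum>b<r. L a b * Y b j)"
    using fact a j by (simp add: factorizes_def)
  also have "\<dots> = [:- z, 1:] * (\<Sum>b<r. L a b * (Y b j div [:- z, 1:]))"
    using div Y j by (simp add: sum_distrib_left mult.left_commute)
  finally show "q div [:- z, 1:] * P a j = (\<Sum>b<r. L a b * (Y b j div [:- z, 1:]))"
    by (simp only: mult_cancel_left pCons_eq_0_iff one_neq_zero simp_thms)
qed

text \<open>At a root \<open>z\<close> of \<open>q\<close> the columns of \<open>L\<close> are independent, so the entries of \<open>Y\<close> that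
  matter vanish at \<open>z\<close> too and the factor \<open>\<lambda> - z\<close> cancels.\<close>
lemma minimal_left_factor_divide_root:
  fixes L :: "nat \<Rightarrow> nat \<Rightarrow> 'a::field poly"
  assumes min: "minimal_left_factor m n r P L" and fact: "factorizes m n r P q L Y"
    and z: "poly q z = 0"
  shows "\<exists>Y'. factorizes m n r P (q div [:- z, 1:]) L Y'"
proof -
  define Y' where "Y' = (\<lambda>b j. if \<forall>a<m. L a b = 0 then 0 else Y b j)"
  have fact': "factorizes m n r P q L Y'"
    using factorizes_restrict_support[OF fact] by (simp add: Y'_def)
  have "\<forall>b<r. poly (Y' b j) z = 0" if j: "j < n" for j
  proof -
    have "\<forall>b<r. poly (Y' b j) z \<noteq> 0 \<longrightarrow> (\<exists>a<m. L a b \<noteq> 0)"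
      by (auto simp: Y'_def)
    moreover have "\<forall>a<m. (\<Sum>b<r. poly (Y' b j) z * poly (L a b) z) = 0"
    proof (intro allI impI)
      fix a assume "a < m"
      then have "poly (\<Sum>b<r. L a b * Y' b j) z = poly (q * P a j) z"
        using fact' j by (simp add: factorizes_def)
      then show "(\<Sum>b<r. poly (Y' b j) z * poly (L a b) z) = 0"
        using z by (simp add: poly_sum mult.commute)
    qed
    ultimately show ?thesis
      by (rule minimal_left_factor_independent_at[OF min])
  qed
  then show ?thesis
    using factorizes_divide_root[OF fact' z] by blast
qed

lemma minimal_left_factor_exact:
  fixes P L :: "nat \<Rightarrow> nat \<Rightarrow> complex poly"
  assumes min: "minimal_left_factor m n r P L"
  shows "\<exists>X. factorizes m n r P 1 L X"
proof -
  have "\<exists>X. factorizes m n r P 1 L X" if "q \<noteq> 0" "factorizes m n r P q L Y" for q Y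
    using that
  proof (induction "degree q" arbitrary: q Y rule: less_induct)
    case less
    show ?case
    proof (cases "degree q = 0")
      case True
      then obtain c where c: "q = [:c:]"
        by (rule degree_eq_zeroE)
      then have "c \<noteq> 0"
        using less.prems(1) by simp
      have "(\<Sum>b<r. L a b * Y b j) = smult c (P a j)" if "a < m" "j < n" for a j
        using less.prems(2) c that by (simp add: factorizes_def)
      then have "factorizes m n r P 1 L (\<lambda>b j. smult (1 / c) (Y b j))"
        using \<open>c \<noteq> 0\<close> by (simp add: factorizes_def smult_sum_right[symmetric])
      then show ?thesis by blast
    next
      case False
      then obtain z where z: "poly q z = 0"
        using fundamental_theorem_of_algebra[of q] constant_degree[of q] by auto
      then obtain Y' where fact: "factorizes m n r P (q div [:- z, 1:]) L Y'"
        using minimal_left_factor_divide_root[OF min less.prems(2)] by blast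
      have q_eq: "q = [:- z, 1:] * (q div [:- z, 1:])"
        using z by (metis dvd_mult_div_cancel poly_eq_0_iff_dvd)
      then have nz: "q div [:- z, 1:] \<noteq> 0"
        using less.prems(1) by (metis mult_zero_right)
      then have "degree ([:- z, 1:] * (q div [:- z, 1:])) = Suc (degree (q div [:- z, 1:]))"
        by (subst degree_mult_eq) simp_all
      then have "degree (q div [:- z, 1:]) < degree q"
        by (metis q_eq lessI)
      then show ?thesis
        using less.hyps[OF _ nz fact] by simp
    qed
  qed
  then show ?thesis
    using min by (auto simp: minimal_left_factor_def)
qed

lemma coeff_mult_at_degree_bounds:
  fixes p q :: "'a::comm_semiring_1 poly"
  assumes p: "degree p \<le> i" and q: "degree q \<le> k"
  shows "coeff (p * q) (i + k) = coeff p i * coeff q k"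
proof (cases "degree p = i \<and> degree q = k")
  case True
  then show ?thesis using coeff_mult_degree_sum[of p q] by simp
next
  case False
  then have "degree p < i \<or> degree q < k" using p q by auto
  moreover have "degree (p * q) < i + k"
    using degree_mult_le[of p q] p q calculation by linarith
  ultimately show ?thesis by (auto simp: coeff_eq_0)
qed

lemma factorizes_top_coeffs_cancel:
  fixes P L X :: "nat \<Rightarrow> nat \<Rightarrow> 'a::field poly"
  assumes fact: "factorizes m n r P 1 L X" and a: "a < m" and j: "j < n"
    and deg_P: "degree (P a j) < D"
    and deg_LX: "\<forall>c<r. X c j \<noteq> 0 \<longrightarrow> col_degree m (\<lambda>a. L a c) + degree (X c j) \<le> D"
  shows "(\<Sum>c<r. (if X c j \<noteq> 0 \<and> col_degree m (\<lambda>a. L a c) + degree (X c j) = D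
      then lead_coeff (X c j) else 0) * coeff (L a c) (col_degree m (\<lambda>a. L a c))) = 0"
proof -
  have "coeff (L a c * X c j) D = (if X c j \<noteq> 0 \<and> col_degree m (\<lambda>a. L a c) + degree (X c j) = D
      then lead_coeff (X c j) else 0) * coeff (L a c) (col_degree m (\<lambda>a. L a c))"
    if c: "c < r" for c
  proof (cases "X c j \<noteq> 0 \<and> col_degree m (\<lambda>a. L a c) + degree (X c j) = D")
    case True
    then show ?thesis
      using coeff_mult_at_degree_bounds[OF degree_le_col_degree[OF a] order_refl, of "\<lambda>a. L a c" "X c j"]
      by simp
  next
    case False
    have "degree (L a c * X c j) \<le> col_degree m (\<lambda>a. L a c) + degree (X c j)"
      using degree_mult_le[of "L a c" "X c j"] degree_le_col_degree[OF a, of "\<lambda>a. L a c"] by simp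
    then have "coeff (L a c * X c j) D = 0"
      using False deg_LX c by (cases "X c j = 0") (auto simp: coeff_eq_0)
    then show ?thesis
      using False by auto
  qed
  then have "(\<Sum>c<r. (if X c j \<noteq> 0 \<and> col_degree m (\<lambda>a. L a c) + degree (X c j) = D
      then lead_coeff (X c j) else 0) * coeff (L a c) (col_degree m (\<lambda>a. L a c))) = coeff (P a j) D"
    using fact a j by (simp add: factorizes_def coeff_sum)
  also have "\<dots> = 0"
    using deg_P by (simp add: coeff_eq_0)
  finally show ?thesis .
qed

text \<open>Predictable degrees: if some \<open>L\<^sub>b X\<^sub>b\<^sub>j\<close> exceeded degree \<open>d\<close>, the leading coefficients of the
  summands of top degree in \<open>P\<^sub>a\<^sub>j = \<Sum>b L\<^sub>a\<^sub>b X\<^sub>b\<^sub>j\<close> would cancel, against column reducedness.\<close>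
lemma minimal_left_factor_degree_bound:
  fixes P L X :: "nat \<Rightarrow> nat \<Rightarrow> 'a::field poly"
  assumes min: "minimal_left_factor m n r P L" and fact: "factorizes m n r P 1 L X"
    and support: "\<forall>b<r. \<forall>j<n. X b j \<noteq> 0 \<longrightarrow> (\<exists>a<m. L a b \<noteq> 0)"
    and deg_P: "\<forall>a<m. \<forall>j<n. degree (P a j) \<le> d"
    and b: "b < r" and j: "j < n" and X: "X b j \<noteq> 0"
  shows "col_degree m (\<lambda>a. L a b) + degree (X b j) \<le> d"
proof (rule ccontr)
  define F where "F c = col_degree m (\<lambda>a. L a c) + degree (X c j)" for c
  assume "\<not> col_degree m (\<lambda>a. L a b) + degree (X b j) \<le> d"
  then have "d < F b" by (simp add: F_def)
  obtain i where i: "i < r" "X i j \<noteq> 0" and max: "\<And>c. c < r \<Longrightarrow> X c j \<noteq> 0 \<Longrightarrow> F c \<le> F i"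
    using exists_max_on_support[of r "\<lambda>c. X c j" F] b X by blast
  define y where "y c = (if X c j \<noteq> 0 \<and> F c = F i then lead_coeff (X c j) else 0)" for c
  have "\<forall>c<r. y c = 0"
  proof (rule minimal_left_factor_column_reduced[OF min])
    show "\<forall>c<r. y c \<noteq> 0 \<longrightarrow> (\<exists>a<m. L a c \<noteq> 0)"
      using support j by (auto simp: y_def)
    have "degree (P a j) < F i" if "a < m" for a
      using deg_P that j max[OF b X] \<open>d < F b\<close> by fastforce
    then show "\<forall>a<m. (\<Sum>c<r. y c * coeff (L a c) (col_degree m (\<lambda>a. L a c))) = 0"
      using factorizes_top_coeffs_cancel[OF fact _ j] max unfolding y_def F_def by blast
  qed
  then have "y i = 0"
    using i(1) by blast
  then show False
    using i(2) by (simp add: y_def)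
qed

lemma exists_degree_bounded_factorization:
  assumes "P \<in> polymat_rank_le m n d r"
  shows "\<exists>L X. factorizes m n r (\<lambda>a j. P $$ (a, j)) 1 L X \<and>
    (\<forall>b<r. (\<exists>j<n. X b j \<noteq> 0) \<longrightarrow>
      (\<exists>a<m. L a b \<noteq> 0) \<and> col_degree m (\<lambda>a. L a b) + col_degree n (\<lambda>j. X b j) \<le> d)"
proof -
  have P: "P \<in> carrier_mat m n" and deg_P: "\<forall>a<m. \<forall>j<n. degree (P $$ (a, j)) \<le> d"
    and rank: "vec_space.rank m (map_mat to_fract P) \<le> r"
    using assms by (auto simp: polymat_rank_le_def polymat_space_def normal_rank_def)
  obtain q L0 Y0 where "q \<noteq> 0" "factorizes m n r (\<lambda>a j. P $$ (a, j)) q L0 Y0"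
    using scaled_factorization_of_rank_le[OF P rank] by blast
  then obtain L where min: "minimal_left_factor m n r (\<lambda>a j. P $$ (a, j)) L"
    using exists_minimal_left_factor by blast
  then obtain X0 where "factorizes m n r (\<lambda>a j. P $$ (a, j)) 1 L X0"
    using minimal_left_factor_exact by blast
  define X where "X = (\<lambda>b j. if \<forall>a<m. L a b = 0 then 0 else X0 b j)"
  have fact: "factorizes m n r (\<lambda>a j. P $$ (a, j)) 1 L X"
    unfolding X_def by (rule factorizes_restrict_support) fact
  have support: "\<forall>b<r. \<forall>j<n. X b j \<noteq> 0 \<longrightarrow> (\<exists>a<m. L a b \<noteq> 0)"
    by (auto simp: X_def)
  have "col_degree m (\<lambda>a. L a b) + col_degree n (\<lambda>j. X b j) \<le> d"
    if b: "b < r" and j0: "j0 < n" "X b j0 \<noteq> 0" for b j0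
  proof -
    have bound: "col_degree m (\<lambda>a. L a b) + degree (X b j) \<le> d" if "j < n" "X b j \<noteq> 0" for j
      using minimal_left_factor_degree_bound[OF min fact support] deg_P b that by blast
    then have "degree (X b j) \<le> d - col_degree m (\<lambda>a. L a b)" if "j < n" for j
      using that by (cases "X b j = 0") fastforce+
    then have "col_degree n (\<lambda>j. X b j) \<le> d - col_degree m (\<lambda>a. L a b)"
      using j0 by (subst col_degree_le_iff) auto
    then show ?thesis
      using bound[OF j0] by linarith
  qed
  then show ?thesis
    using fact support by blast
qed

section \<open>Raising degrees to exactly \<open>d\<close>\<close>

lemma pvec_degree_vec:
  assumes "\<exists>a<m. c a \<noteq> 0"
  shows "pvec_degree (vec m c) = ereal (col_degree m c)"
proof -
  have "{degree (vec m c $ a) | a. a < m} = (\<lambda>a. degree (c a)) ` {..<m}"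
    by force
  then show ?thesis
    using assms by (simp add: pvec_degree_def col_degree_def)
qed

lemma pvec_degree_padded_col:
  fixes l :: "nat \<Rightarrow> complex poly"
  assumes m: "0 < m" and t: "t \<noteq> 0" and k: "col_degree m l < k"
  shows "pvec_degree (vec m (\<lambda>a. l a + (if a = 0 then monom t k else 0))) = ereal k"
proof -
  have l: "degree (l a) < k" if "a < m" for a
    using degree_le_col_degree[OF that, of l] k by simp
  then have deg: "degree (l a + (if a = 0 then monom t k else 0)) = (if a = 0 then k else degree (l a))"
    if "a < m" for a
    using that t by (simp add: degree_add_eq_right degree_monom_eq)
  then have "col_degree m (\<lambda>a. l a + (if a = 0 then monom t k else 0)) = k"
    using m l deg[OF m] by (intro col_degree_eqI[of 0]) (auto simp: less_imp_le)
  moreover have "l 0 + monom t k \<noteq> 0"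
    using deg[OF m] k by auto
  ultimately show ?thesis
    using m by (subst pvec_degree_vec) auto
qed

text \<open>A column-row pair whose degrees sum to at most \<open>d\<close> is raised to degree sum exactly \<open>d\<close> by
  adding \<open>t \<lambda>\<^sup>k\<close> to the first entry of the column, and a vanishing pair is replaced by
  \<open>(t \<lambda>\<^sup>d, 1)\<close> in the first row and column; either way the product moves by \<open>t\<close> times a fixed matrix.\<close>
lemma rank_one_padding:
  fixes l x :: "nat \<Rightarrow> complex poly"
  assumes m: "0 < m" and n: "0 < n"
    and bound: "(\<exists>j<n. x j \<noteq> 0) \<longrightarrow> (\<exists>a<m. l a \<noteq> 0) \<and> col_degree m l + col_degree n x \<le> d"
  shows "\<exists>e. \<forall>t. t \<noteq> 0 \<longrightarrow> (\<exists>l' x'. pvec_degree (vec m l') + pvec_degree (vec n x') = ereal d \<and>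
    (\<forall>a<m. \<forall>j<n. l' a * x' j = l a * x j + smult t (e a j)))"
proof (cases "\<exists>j<n. x j \<noteq> 0")
  case False
  define e :: "nat \<Rightarrow> nat \<Rightarrow> complex poly"
    where "e a j = (if a = 0 \<and> j = 0 then monom 1 d else 0)" for a j
  have "pvec_degree (vec m (\<lambda>a. if a = 0 then monom t d else 0)) +
      pvec_degree (vec n (\<lambda>j. if j = 0 then 1 else 0)) = ereal d \<and>
    (\<forall>a<m. \<forall>j<n. (if a = 0 then monom t d else 0) * (if j = 0 then 1 else 0) = l a * x j + smult t (e a j))"
    if "t \<noteq> 0" for t
  proof -
    have "pvec_degree (vec m (\<lambda>a. if a = 0 then monom t d else 0)) = ereal d"
      using m that by (subst pvec_degree_vec) (auto intro!: col_degree_eqI[of 0] simp: degree_monom_eq)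
    moreover have "pvec_degree (vec n (\<lambda>j. if j = 0 then 1 else 0)) = 0"
      using n by (subst pvec_degree_vec) (auto simp: zero_ereal_def intro!: col_degree_eqI[of 0])
    ultimately show ?thesis
      using False by (simp add: e_def smult_monom)
  qed
  then show ?thesis
    by blast
next
  case True
  then have l: "\<exists>a<m. l a \<noteq> 0" and sum: "col_degree m l + col_degree n x \<le> d"
    using bound by auto
  define k where "k = d - col_degree n x"
  have x_deg: "pvec_degree (vec n x) = ereal (col_degree n x)"
    using True by (rule pvec_degree_vec)
  show ?thesis
  proof (cases "col_degree m l < k")
    case True
    define e :: "nat \<Rightarrow> nat \<Rightarrow> complex poly"
      where "e a j = (if a = 0 then monom 1 k * x j else 0)" for a j
    have "(l a + (if a = 0 then monom t k else 0)) * x j = l a * x j + smult t (e a j)" for a j t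
    proof -
      have "monom t k = smult t (monom 1 k)" by (simp add: smult_monom)
      then show ?thesis by (simp add: e_def algebra_simps)
    qed
    moreover have "pvec_degree (vec m (\<lambda>a. l a + (if a = 0 then monom t k else 0))) + pvec_degree (vec n x)
        = ereal d" if "t \<noteq> 0" for t
      using pvec_degree_padded_col[OF m that True] x_deg sum by (simp add: k_def)
    ultimately show ?thesis
      by (intro exI[of _ e] allI impI exI) auto
  next
    case False
    then have "pvec_degree (vec m l) + pvec_degree (vec n x) = ereal d"
      using pvec_degree_vec[OF l] x_deg sum by (simp add: k_def)
    then show ?thesis
      by (intro exI[of _ "\<lambda>_ _. 0"] allI impI exI[of _ l] exI[of _ x]) simp
  qed
qed

lemma exists_prod_set_line:
  fixes P L X :: "nat \<Rightarrow> nat \<Rightarrow> complex poly"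
  assumes m: "0 < m" and n: "0 < n" and fact: "factorizes m n r P 1 L X"
    and bound: "\<forall>b<r. (\<exists>j<n. X b j \<noteq> 0) \<longrightarrow>
      (\<exists>a<m. L a b \<noteq> 0) \<and> col_degree m (\<lambda>a. L a b) + col_degree n (\<lambda>j. X b j) \<le> d"
  shows "\<exists>E. \<forall>t. t \<noteq> 0 \<longrightarrow> (\<exists>Q\<in>prod_set m n r d. \<forall>a<m. \<forall>j<n. Q $$ (a, j) = P a j + smult t (E a j))"
proof -
  have "\<forall>b\<in>{..<r}. \<exists>e. \<forall>t. t \<noteq> 0 \<longrightarrow> (\<exists>l' x'. pvec_degree (vec m l') + pvec_degree (vec n x') = ereal d \<and>
      (\<forall>a<m. \<forall>j<n. l' a * x' j = L a b * X b j + smult t (e a j)))"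
  proof
    fix b assume "b \<in> {..<r}"
    then show "\<exists>e. \<forall>t. t \<noteq> 0 \<longrightarrow> (\<exists>l' x'. pvec_degree (vec m l') + pvec_degree (vec n x') = ereal d \<and>
        (\<forall>a<m. \<forall>j<n. l' a * x' j = L a b * X b j + smult t (e a j)))"
      using rank_one_padding[OF m n, where l = "\<lambda>a. L a b" and x = "\<lambda>j. X b j"] bound by auto
  qed
  from bchoice[OF this] obtain e where e: "\<forall>b\<in>{..<r}. \<forall>t. t \<noteq> 0 \<longrightarrow> (\<exists>l' x'.
      pvec_degree (vec m l') + pvec_degree (vec n x') = ereal d \<and>
      (\<forall>a<m. \<forall>j<n. l' a * x' j = L a b * X b j + smult t (e b a j)))"
    by blast
  define E where "E a j = (\<Sum>b<r. e b a j)" for a j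
  define padded where "padded t b l' x' \<longleftrightarrow>
    pvec_degree (vec m l') + pvec_degree (vec n x') = ereal d \<and>
    (\<forall>a<m. \<forall>j<n. l' a * x' j = L a b * X b j + smult t (e b a j))" for t b l' x'
  have "\<exists>Q\<in>prod_set m n r d. \<forall>a<m. \<forall>j<n. Q $$ (a, j) = P a j + smult t (E a j)" if t: "t \<noteq> 0" for t
  proof -
    have "\<forall>b\<in>{..<r}. \<exists>l' x'. padded t b l' x'"
      using e t by (simp add: padded_def)
    from bchoice[OF this] obtain l' where "\<forall>b\<in>{..<r}. \<exists>x'. padded t b (l' b) x'" ..
    from bchoice[OF this] obtain x' where lx: "\<forall>b\<in>{..<r}. padded t b (l' b) (x' b)" ..
    define Lm where "Lm = mat m r (\<lambda>(a, b). l' b a)"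
    define Rm where "Rm = mat r n (\<lambda>(b, j). x' b j)"
    have "col Lm b = vec m (l' b)" "row Rm b = vec n (x' b)" if "b < r" for b
      using that by (auto simp: Lm_def Rm_def)
    then have "\<forall>b<r. pvec_degree (col Lm b) + pvec_degree (row Rm b) = ereal d"
      using lx by (simp add: padded_def)
    moreover have "Lm \<in> carrier_mat m r" "Rm \<in> carrier_mat r n"
      by (simp_all add: Lm_def Rm_def)
    ultimately have "Lm * Rm \<in> prod_set m n r d"
      unfolding prod_set_def by blast
    moreover have "(Lm * Rm) $$ (a, j) = P a j + smult t (E a j)" if "a < m" "j < n" for a j
    proof -
      have "(Lm * Rm) $$ (a, j) = (\<Sum>b<r. l' b a * x' b j)"
        using that by (simp add: Lm_def Rm_def scalar_prod_def atLeast0LessThan)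
      also have "\<dots> = (\<Sum>b<r. L a b * X b j) + smult t (E a j)"
        using lx that by (simp add: padded_def E_def sum.distrib smult_sum_right)
      also have "\<dots> = P a j + smult t (E a j)"
        using fact that by (simp add: factorizes_def)
      finally show ?thesis .
    qed
    ultimately show ?thesis by blast
  qed
  then show ?thesis by blast
qed

section \<open>Closure in the coefficient metric\<close>

lemma pm_closure_mono: "A \<subseteq> B \<Longrightarrow> pm_closure m n d A \<subseteq> pm_closure m n d B"
  unfolding pm_closure_def by blast

lemma in_pm_closureI:
  assumes P: "P \<in> polymat_space m n d" and F: "F \<noteq> bot" and S: "\<forall>\<^sub>F x in F. Q x \<in> S"
    and lim: "\<And>a j k. a < m \<Longrightarrow> j < n \<Longrightarrow> k \<le> d \<Longrightarrow>
      ((\<lambda>x. coeff (Q x $$ (a, j)) k) \<longlongrightarrow> coeff (P $$ (a, j)) k) F"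
  shows "P \<in> pm_closure m n d S"
proof -
  have dims: "dim_row P = m" "dim_col P = n"
    using P by (auto simp: polymat_space_def)
  have "((\<lambda>x. pm_dist d P (Q x)) \<longlongrightarrow>
      sqrt (\<Sum>k\<le>d. \<Sum>a<m. \<Sum>j<n. (cmod (coeff (P $$ (a, j)) k - coeff (P $$ (a, j)) k))\<^sup>2)) F"
    unfolding pm_dist_def dims
    by (intro tendsto_real_sqrt tendsto_sum tendsto_power tendsto_norm tendsto_diff tendsto_const lim) auto
  then have "((\<lambda>x. pm_dist d P (Q x)) \<longlongrightarrow> 0) F"
    by simp
  then have "\<exists>x. Q x \<in> S \<and> pm_dist d P (Q x) < \<epsilon>" if "\<epsilon> > 0" for \<epsilon>
    using eventually_happens'[OF F eventually_conj[OF S order_tendstoD(2)]] that by blast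
  then show ?thesis
    using P by (auto simp: pm_closure_def)
qed

lemma polymat_rank_le_subset_pm_closure:
  assumes m: "0 < m" and n: "0 < n"
  shows "polymat_rank_le m n d r \<subseteq> pm_closure m n d (prod_set m n r d)"
proof
  fix P assume P: "P \<in> polymat_rank_le m n d r"
  obtain L X where "factorizes m n r (\<lambda>a j. P $$ (a, j)) 1 L X"
    and "\<forall>b<r. (\<exists>j<n. X b j \<noteq> 0) \<longrightarrow>
      (\<exists>a<m. L a b \<noteq> 0) \<and> col_degree m (\<lambda>a. L a b) + col_degree n (\<lambda>j. X b j) \<le> d"
    using exists_degree_bounded_factorization[OF P] by blast
  then obtain E where E: "\<forall>t. t \<noteq> 0 \<longrightarrow>
      (\<exists>Q\<in>prod_set m n r d. \<forall>a<m. \<forall>j<n. Q $$ (a, j) = P $$ (a, j) + smult t (E a j))"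
    using exists_prod_set_line[OF m n] by blast
  have "\<forall>t. \<exists>Q. t \<noteq> 0 \<longrightarrow>
      Q \<in> prod_set m n r d \<and> (\<forall>a<m. \<forall>j<n. Q $$ (a, j) = P $$ (a, j) + smult t (E a j))"
    using E by blast
  from choice[OF this] obtain Q where Q: "\<And>t. t \<noteq> 0 \<Longrightarrow>
      Q t \<in> prod_set m n r d \<and> (\<forall>a<m. \<forall>j<n. Q t $$ (a, j) = P $$ (a, j) + smult t (E a j))"
    by blast
  show "P \<in> pm_closure m n d (prod_set m n r d)"
  proof (rule in_pm_closureI[where F = "at 0" and Q = Q])
    show "P \<in> polymat_space m n d"
      using P by (simp add: polymat_rank_le_def)
    show "\<forall>\<^sub>F t in at 0. Q t \<in> prod_set m n r d"
      using eventually_neq_at_within[of 0 0 UNIV] by eventually_elim (use Q in blast)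
    fix a j k assume a: "a < m" and j: "j < n"
    have "((\<lambda>t. coeff (P $$ (a, j)) k + t * coeff (E a j) k) \<longlongrightarrow> coeff (P $$ (a, j)) k) (at 0)"
      by (auto intro!: tendsto_eq_intros)
    moreover have "\<forall>\<^sub>F t in at 0. coeff (P $$ (a, j)) k + t * coeff (E a j) k = coeff (Q t $$ (a, j)) k"
      using eventually_neq_at_within[of 0 0 UNIV] by eventually_elim (use Q a j in simp)
    ultimately show "((\<lambda>t. coeff (Q t $$ (a, j)) k) \<longlongrightarrow> coeff (P $$ (a, j)) k) (at 0)"
      by (rule Lim_transform_eventually)
  qed simp
qed

lemma coeff_diff_le_pm_dist:
  assumes "P \<in> carrier_mat m n" and "a < m" and "j < n" and "k \<le> d"
  shows "cmod (coeff (P $$ (a, j)) k - coeff (Q $$ (a, j)) k) \<le> pm_dist d P Q"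
proof -
  let ?f = "\<lambda>k a j. (cmod (coeff (P $$ (a, j)) k - coeff (Q $$ (a, j)) k))\<^sup>2"
  have "?f k a j \<le> (\<Sum>j'<n. ?f k a j')"
    using assms by (intro member_le_sum) auto
  also have "\<dots> \<le> (\<Sum>a'<m. \<Sum>j'<n. ?f k a' j')"
    using assms by (intro member_le_sum[of a] sum_nonneg) auto
  also have "\<dots> \<le> (\<Sum>k'\<le>d. \<Sum>a'<m. \<Sum>j'<n. ?f k' a' j')"
    using assms by (intro member_le_sum[of k] sum_nonneg) auto
  finally show ?thesis
    using assms(1) unfolding pm_dist_def by (simp add: real_le_rsqrt)
qed

lemma pm_closure_sequence:
  assumes P: "P \<in> pm_closure m n d S"
  obtains Q where "\<And>i. Q i \<in> S" and "\<And>a j k. a < m \<Longrightarrow> j < n \<Longrightarrow> k \<le> d \<Longrightarrow>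
    (\<lambda>i. coeff (Q i $$ (a, j)) k) \<longlonglongrightarrow> coeff (P $$ (a, j)) k"
proof -
  have "\<forall>i. \<exists>Q\<in>S. pm_dist d P Q < inverse (real (Suc i))"
    using P unfolding pm_closure_def by auto
  then obtain Q where Q: "\<And>i. Q i \<in> S" and dist: "\<And>i. pm_dist d P (Q i) < inverse (real (Suc i))"
    by metis
  have "(\<lambda>i. coeff (Q i $$ (a, j)) k) \<longlonglongrightarrow> coeff (P $$ (a, j)) k"
    if "a < m" "j < n" "k \<le> d" for a j k
  proof -
    have "norm (coeff (Q i $$ (a, j)) k - coeff (P $$ (a, j)) k) \<le> inverse (real (Suc i))" for i
      using coeff_diff_le_pm_dist[of P m n a j k d "Q i"] dist[of i] P that
      by (simp add: pm_closure_def polymat_space_def norm_minus_commute)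
    then have "(\<lambda>i. coeff (Q i $$ (a, j)) k - coeff (P $$ (a, j)) k) \<longlonglongrightarrow> 0"
      by (intro tendsto_0_le[OF LIMSEQ_inverse_real_of_nat, of _ 1]) auto
    then show ?thesis
      by (simp add: LIM_zero_iff)
  qed
  then show ?thesis using Q that by blast
qed

lemma tendsto_poly_of_coeff:
  fixes p :: "'b \<Rightarrow> 'a::real_normed_field poly"
  assumes "\<And>x. degree (p x) \<le> d" and "degree p0 \<le> d"
    and "\<And>k. k \<le> d \<Longrightarrow> ((\<lambda>x. coeff (p x) k) \<longlongrightarrow> coeff p0 k) F"
  shows "((\<lambda>x. poly (p x) z) \<longlongrightarrow> poly p0 z) F"
proof -
  have poly_eq: "poly q z = (\<Sum>k\<le>d. coeff q k * z ^ k)" if "degree q \<le> d" for q :: "'a poly"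
    unfolding poly_altdef using that by (intro sum.mono_neutral_left) (auto simp: coeff_eq_0)
  show ?thesis
    unfolding poly_eq[OF assms(1)] poly_eq[OF assms(2)]
    by (intro tendsto_sum tendsto_mult tendsto_const assms(3)) simp
qed

lemma tendsto_det_mat:
  fixes e :: "'b \<Rightarrow> nat \<Rightarrow> nat \<Rightarrow> 'a::real_normed_field"
  assumes "\<And>a b. a < N \<Longrightarrow> b < N \<Longrightarrow> ((\<lambda>x. e x a b) \<longlongrightarrow> e0 a b) F"
  shows "((\<lambda>x. det (mat N N (\<lambda>(a, b). e x a b))) \<longlongrightarrow> det (mat N N (\<lambda>(a, b). e0 a b))) F"
proof -
  have det_eq: "det (mat N N (\<lambda>(a, b). h a b)) =
      (\<Sum>p\<in>{p. p permutes {0..<N}}. signof p * (\<Prod>i = 0..<N. h i (p i)))" for h :: "nat \<Rightarrow> nat \<Rightarrow> 'a"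
    unfolding det_def using permutes_in_image by (fastforce intro!: sum.cong prod.cong)
  show ?thesis
    unfolding det_eq using permutes_in_image
    by (intro tendsto_sum tendsto_mult tendsto_const tendsto_prod assms) fastforce+
qed

lemma comm_ring_hom_poly: "comm_ring_hom (\<lambda>p. poly p z)"
  by unfold_locales auto

lemma tendsto_poly_det_minor_mat:
  assumes Q: "\<And>x. Q x \<in> polymat_space m n d" and P: "P \<in> polymat_space m n d"
    and f: "\<forall>a<N. f a < m" and g: "\<forall>b<N. g b < n"
    and lim: "\<And>a j k. a < m \<Longrightarrow> j < n \<Longrightarrow> k \<le> d \<Longrightarrow>
      ((\<lambda>x. coeff (Q x $$ (a, j)) k) \<longlongrightarrow> coeff (P $$ (a, j)) k) F"
  shows "((\<lambda>x. poly (det (minor_mat (Q x) N f g)) z) \<longlongrightarrow> poly (det (minor_mat P N f g)) z) F"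
proof -
  have eval: "poly (det (minor_mat A N f g)) z = det (mat N N (\<lambda>(a, b). poly (A $$ (f a, g b)) z))"
    for A :: "complex poly mat"
  proof -
    have "map_mat (\<lambda>p. poly p z) (minor_mat A N f g) = mat N N (\<lambda>(a, b). poly (A $$ (f a, g b)) z)"
      by (auto simp: minor_mat_def)
    then show ?thesis
      using comm_ring_hom.hom_det[OF comm_ring_hom_poly] by metis
  qed
  show ?thesis
    unfolding eval using Q P f g
    by (intro tendsto_det_mat tendsto_poly_of_coeff lim) (auto simp: polymat_space_def)
qed

lemma pm_closure_polymat_rank_le: "pm_closure m n d (polymat_rank_le m n d r) \<subseteq> polymat_rank_le m n d r"
proof
  fix P assume P: "P \<in> pm_closure m n d (polymat_rank_le m n d r)"
  then have P_space: "P \<in> polymat_space m n d"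
    by (simp add: pm_closure_def)
  obtain Q where Q: "\<And>i. Q i \<in> polymat_rank_le m n d r"
    and lim: "\<And>a j k. a < m \<Longrightarrow> j < n \<Longrightarrow> k \<le> d \<Longrightarrow>
      (\<lambda>i. coeff (Q i $$ (a, j)) k) \<longlonglongrightarrow> coeff (P $$ (a, j)) k"
    using pm_closure_sequence[OF P] by blast
  have "normal_rank P \<le> r"
  proof (rule ccontr)
    assume "\<not> normal_rank P \<le> r"
    moreover have "P \<in> carrier_mat m n"
      using P_space by (simp add: polymat_space_def)
    ultimately obtain f g where f: "\<forall>a<Suc r. f a < m" and g: "\<forall>b<Suc r. g b < n"
      and "det (minor_mat P (Suc r) f g) \<noteq> 0"
      using normal_rank_ge_iff_nonzero_minor[of P m n "Suc r"] by auto
    then obtain z where z: "poly (det (minor_mat P (Suc r) f g)) z \<noteq> 0"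
      using poly_all_0_iff_0 by blast
    have "det (minor_mat (Q i) (Suc r) f g) = 0" for i
    proof -
      have "Q i \<in> carrier_mat m n" "normal_rank (Q i) \<le> r"
        using Q[of i] by (auto simp: polymat_rank_le_def polymat_space_def)
      then have "\<not> (\<exists>f g. (\<forall>a<Suc r. f a < m) \<and> (\<forall>b<Suc r. g b < n) \<and>
          det (minor_mat (Q i) (Suc r) f g) \<noteq> 0)"
        using normal_rank_ge_iff_nonzero_minor[of "Q i" m n "Suc r"] by simp
      then show ?thesis
        using f g by blast
    qed
    moreover have "(\<lambda>i. poly (det (minor_mat (Q i) (Suc r) f g)) z) \<longlonglongrightarrow> poly (det (minor_mat P (Suc r) f g)) z"
      by (rule tendsto_poly_det_minor_mat[OF _ P_space f g lim]) (use Q in \<open>auto simp: polymat_rank_le_def\<close>)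
    ultimately have "(\<lambda>i. 0) \<longlonglongrightarrow> poly (det (minor_mat P (Suc r) f g)) z"
      by simp
    then show False
      using z by (simp add: LIMSEQ_const_iff)
  qed
  then show "P \<in> polymat_rank_le m n d r"
    using P_space by (simp add: polymat_rank_le_def)
qed

lemma degree_le_pvec_degree:
  assumes "i < dim_vec v" and "v $ i \<noteq> 0"
  shows "ereal (degree (v $ i)) \<le> pvec_degree v"
proof -
  have "degree (v $ i) \<le> Max {degree (v $ i) | i. i < dim_vec v}"
    using assms(1) by (intro Max_ge) auto
  then show ?thesis
    using assms by (auto simp: pvec_degree_def)
qed

lemma prod_set_subset_polymat_rank_le: "prod_set m n r d \<subseteq> polymat_rank_le m n d r"
proof
  fix Q assume "Q \<in> prod_set m n r d"
  then obtain L R where Q: "Q = L * R" and L: "L \<in> carrier_mat m r" and R: "R \<in> carrier_mat r n"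
    and deg: "\<forall>b<r. pvec_degree (col L b) + pvec_degree (row R b) = ereal d"
    unfolding prod_set_def by blast
  have "degree (L $$ (a, b) * R $$ (b, j)) \<le> d" if "a < m" "j < n" "b < r" for a j b
  proof (cases "L $$ (a, b) = 0 \<or> R $$ (b, j) = 0")
    case False
    then have "ereal (degree (L $$ (a, b))) + ereal (degree (R $$ (b, j))) \<le>
        pvec_degree (col L b) + pvec_degree (row R b)"
      using degree_le_pvec_degree[of a "col L b"] degree_le_pvec_degree[of j "row R b"] L R that
      by (intro add_mono) auto
    then have "degree (L $$ (a, b)) + degree (R $$ (b, j)) \<le> d"
      using deg that by simp
    then show ?thesis
      using degree_mult_le order_trans by blast
  qed auto
  then have "degree (Q $$ (a, j)) \<le> d" if "a < m" "j < n" for a j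
    using that L R unfolding Q by (auto simp: scalar_prod_def atLeast0LessThan intro!: degree_sum_le)
  moreover have "normal_rank Q \<le> r"
    unfolding Q by (rule normal_rank_mult_le[OF L R])
  ultimately show "Q \<in> polymat_rank_le m n d r"
    using L R unfolding Q by (simp add: polymat_rank_le_def polymat_space_def)
qed

theorem theorem4p2:
  fixes m n r d :: nat
  assumes "m \<ge> 2" and "n \<ge> 2" and "d \<ge> 1" and "0 < r" and "r < min m n"
  shows "polymat_rank_le m n d r = pm_closure m n d (prod_set m n r d)"
proof
  show "polymat_rank_le m n d r \<subseteq> pm_closure m n d (prod_set m n r d)"
    using assms by (intro polymat_rank_le_subset_pm_closure) auto
  have "pm_closure m n d (prod_set m n r d) \<subseteq> pm_closure m n d (polymat_rank_le m n d r)"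
    by (intro pm_closure_mono prod_set_subset_polymat_rank_le)
  also have "\<dots> \<subseteq> polymat_rank_le m n d r"
    by (rule pm_closure_polymat_rank_le)
  finally show "pm_closure m n d (prod_set m n r d) \<subseteq> polymat_rank_le m n d r" .
qed

end
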